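(* Let $q > p+1$ and let $(a_0,\dots,a_q)$ and $(b_0,\dots,b_p)$ be appropriate sequences. Let $u, v$ be non-negative integers with $u < v$ and $u + v \leq q - p$. Then $$\sum_{0 \leq i \leq p} a_{i+u} b_i \leq \sum_{0 \leq i \leq p} a_{i+v} b_i.$$
   Context: A real sequence $(c_0,c_1,\dots,c_m)$ is called appropriate if $c_i = c_{m-i}$ for $0 \le i < m/2$ and $0 \leq c_0 \leq c_1 \leq \dots \leq c_{\lfloor m/2\rfloor}$. *)

theory Defs
  imports Complex_Main
begin

text \<open>A real sequence (c_0,...,c_m), represented as a function nat => real
  of which only the values at 0..m matter, is appropriate if it is symmetric
  (c_i = c_(m-i) for 0 <= i < m/2) and 0 <= c_0 <= c_1 <= ... <= c_(floor(m/2)).\<close>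
definition appropriate :: "nat \<Rightarrow> (nat \<Rightarrow> real) \<Rightarrow> bool" where
  "appropriate m c \<longleftrightarrow>
     (\<forall>i. 2 * i < m \<longrightarrow> c i = c (m - i)) \<and>
     0 \<le> c 0 \<and>
     (\<forall>i j. i \<le> j \<and> j \<le> m div 2 \<longrightarrow> c i \<le> c j)"

end

theory Submission
  imports Defs
begin

text \<open>Write \<open>b\<close> as a positive combination of indicator functions of the centred intervals
  \<open>{k..p-k}\<close>, with weights the increments \<open>b k - b (k - 1)\<close>. Both sides of the inequality then
  become positive combinations of sums of \<open>p - 2k + 1\<close> consecutive terms of \<open>a\<close>, starting at
  \<open>k + u\<close> and at \<open>k + v\<close> respectively. Since \<open>a\<close> is symmetric and unimodal, such a window sum
  grows when its start moves towards the middle, and is unchanged under reflection about the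
  middle; the condition \<open>u + v \<le> q - p\<close> says that the window starting at \<open>k + v\<close> is at least as
  central as the one starting at \<open>k + u\<close>.\<close>

lemma appropriate_symmetric:
  assumes "appropriate q a" "x \<le> q"
  shows "a (q - x) = a x"
proof -
  have sym: "\<And>i. 2 * i < q \<Longrightarrow> a i = a (q - i)"
    using assms(1) unfolding appropriate_def by blast
  consider "2 * x < q" | "2 * x = q" | "2 * (q - x) < q"
    using assms(2) by linarith
  then show ?thesis
  proof cases
    case 3
    then show ?thesis using sym[of "q - x"] assms(2) by simp
  qed (use sym in \<open>auto simp: numeral_2_eq_2\<close>)
qed

lemma appropriate_le_if_closer_to_middle:
  assumes "appropriate q a" "x \<le> q" "y \<le> q" "min x (q - x) \<le> min y (q - y)"
  shows "a x \<le> a y"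
proof -
  have "min y (q - y) \<le> q div 2" by linarith
  then have "a (min x (q - x)) \<le> a (min y (q - y))"
    using assms(1,4) unfolding appropriate_def by blast
  moreover have "a (min x (q - x)) = a x" "a (min y (q - y)) = a y"
    using appropriate_symmetric[OF assms(1)] assms(2,3) by (auto simp: min_def)
  ultimately show ?thesis by simp
qed

lemma appropriate_window_sum_le_Suc:
  assumes "appropriate q a" "2 * r + L \<le> q"
  shows "(\<Sum>j<L. a (r + j)) \<le> (\<Sum>j<L. a (Suc r + j))"
proof (cases L)
  case (Suc n)
  have "a r \<le> a (r + L)"
    using appropriate_le_if_closer_to_middle[OF assms(1), of r "r + L"] assms(2) by simp
  moreover have "(\<Sum>j<L. a (r + j)) = a r + (\<Sum>j<n. a (Suc r + j))"
    using Suc by (simp only: sum.lessThan_Suc_shift) simp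
  moreover have "(\<Sum>j<L. a (Suc r + j)) = (\<Sum>j<n. a (Suc r + j)) + a (r + L)"
    using Suc by (simp only: sum.lessThan_Suc) simp
  ultimately show ?thesis by simp
qed simp

lemma appropriate_window_sum_mono:
  assumes "appropriate q a" "s \<le> t" "2 * t + L \<le> q + 2"
  shows "(\<Sum>j<L. a (s + j)) \<le> (\<Sum>j<L. a (t + j))"
  using assms(2,3)
proof (induction t rule: dec_induct)
  case (step t)
  then have "(\<Sum>j<L. a (t + j)) \<le> (\<Sum>j<L. a (Suc t + j))"
    using appropriate_window_sum_le_Suc[OF assms(1), of t L] by simp
  with step show ?case by simp
qed simp

lemma appropriate_window_sum_reflect:
  assumes "appropriate q a" "r + L \<le> q + 1"
  shows "(\<Sum>j<L. a ((q + 1 - L - r) + j)) = (\<Sum>j<L. a (r + j))"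
proof -
  have "(\<Sum>j<L. a ((q + 1 - L - r) + j)) = (\<Sum>j<L. a ((q + 1 - L - r) + (L - Suc j)))"
    by (rule sum.nat_diff_reindex[symmetric])
  also have "\<dots> = (\<Sum>j<L. a (q - (r + j)))"
    using assms(2) by (intro sum.cong) (auto simp: Suc_diff_Suc)
  also have "\<dots> = (\<Sum>j<L. a (r + j))"
    using assms by (intro sum.cong) (auto simp: appropriate_symmetric)
  finally show ?thesis .
qed

text \<open>If the later window reaches past the middle, compare with its mirror image instead.\<close>

lemma appropriate_window_sum_le:
  assumes "appropriate q a" "s \<le> t" "s + t + L \<le> q + 1"
  shows "(\<Sum>j<L. a (s + j)) \<le> (\<Sum>j<L. a (t + j))"
proof (cases "2 * t + L \<le> q + 2")
  case True
  then show ?thesis using appropriate_window_sum_mono[OF assms(1,2)] by simp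
next
  case False
  define t' where "t' = q + 1 - L - t"
  have "s \<le> t'" "2 * t' + L \<le> q + 2"
    using assms False unfolding t'_def by linarith+
  then have "(\<Sum>j<L. a (s + j)) \<le> (\<Sum>j<L. a (t' + j))"
    using appropriate_window_sum_mono[OF assms(1)] by simp
  also have "\<dots> = (\<Sum>j<L. a (t + j))"
    using appropriate_window_sum_reflect[OF assms(1), of t L] assms unfolding t'_def by simp
  finally show ?thesis .
qed

definition increment :: "(nat \<Rightarrow> real) \<Rightarrow> nat \<Rightarrow> real" where
  "increment b k = b k - (if k = 0 then 0 else b (k - 1))"

lemma sum_increment: "(\<Sum>k\<le>m. increment b k) = b m"
  by (induction m) (auto simp: increment_def)

lemma appropriate_increment_nonneg:
  assumes "appropriate p b" "k \<le> p div 2"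
  shows "increment b k \<ge> 0"
proof (cases k)
  case (Suc n)
  have "\<forall>i j. i \<le> j \<and> j \<le> p div 2 \<longrightarrow> b i \<le> b j"
    using assms(1) unfolding appropriate_def by blast
  then have "b n \<le> b k"
    using assms(2) Suc by simp
  with Suc show ?thesis by (simp add: increment_def)
qed (use assms in \<open>simp add: appropriate_def increment_def\<close>)

lemma sum_centred_interval_eq_window:
  fixes k p :: nat
  assumes "2 * k \<le> p"
  shows "(\<Sum>i\<in>{k..p - k}. c i) = (\<Sum>j<p - 2 * k + 1. c (k + j))"
proof -
  from assms have interval: "{k..p - k} = {0 + k..<(p - 2 * k + 1) + k}"
    by auto
  show ?thesis
    unfolding interval sum.shift_bounds_nat_ivl atLeast0LessThan by (simp add: add.commute)
qed

lemma appropriate_sum_mult_eq_layers: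
  assumes "appropriate p b"
  shows "(\<Sum>i\<le>p. b i * c i) = (\<Sum>k\<le>p div 2. increment b k * (\<Sum>i\<in>{k..p - k}. c i))"
proof -
  have layer: "{i. i \<in> {..p} \<and> k \<le> min i (p - i)} = {k..p - k}" for k
    by auto
  have height: "{k. k \<in> {..p div 2} \<and> k \<le> min i (p - i)} = {..min i (p - i)}" for i
    by auto
  have "(\<Sum>k\<le>p div 2. increment b k * (\<Sum>i\<in>{k..p - k}. c i))
      = (\<Sum>k\<le>p div 2. \<Sum>i\<in>{i. i \<in> {..p} \<and> k \<le> min i (p - i)}. increment b k * c i)"
    by (simp only: layer sum_distrib_left)
  also have "\<dots> = (\<Sum>i\<le>p. \<Sum>k\<in>{k. k \<in> {..p div 2} \<and> k \<le> min i (p - i)}. increment b k * c i)"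
    by (rule sum.swap_restrict) simp_all
  also have "\<dots> = (\<Sum>i\<le>p. (\<Sum>k\<le>min i (p - i). increment b k) * c i)"
    by (simp only: height sum_distrib_right)
  also have "\<dots> = (\<Sum>i\<le>p. b i * c i)"
    using assms by (intro sum.cong) (auto simp: sum_increment min_def appropriate_symmetric)
  finally show ?thesis ..
qed

theorem lemma3p4:
  fixes a b :: "nat \<Rightarrow> real" and p q u v :: nat
  assumes "q > p + 1"
    and "appropriate q a" and "appropriate p b"
    and "u < v" and "u + v \<le> q - p"
  shows "(\<Sum>i\<le>p. a (i + u) * b i) \<le> (\<Sum>i\<le>p. a (i + v) * b i)"
proof -
  have layers: "(\<Sum>i\<le>p. a (i + w) * b i)
      = (\<Sum>k\<le>p div 2. increment b k * (\<Sum>j<p - 2 * k + 1. a ((k + w) + j)))" for w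
    using appropriate_sum_mult_eq_layers[OF assms(3), of "\<lambda>i. a (i + w)"]
    by (simp add: mult.commute sum_centred_interval_eq_window add_ac)
  show ?thesis
    unfolding layers
  proof (rule sum_mono, rule mult_left_mono)
    fix k assume "k \<in> {..p div 2}"
    then show "increment b k \<ge> 0"
      using appropriate_increment_nonneg[OF assms(3)] by simp
    show "(\<Sum>j<p - 2 * k + 1. a ((k + u) + j)) \<le> (\<Sum>j<p - 2 * k + 1. a ((k + v) + j))"
      using \<open>k \<in> {..p div 2}\<close> assms by (intro appropriate_window_sum_le) auto
  qed
qed

end
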